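(* Let $X$ be a set and let $S$ be any collection of self-maps of $X$. Let $M_S$ be the monoid consisting of the identity map and all finite compositions $\phi_n\circ\cdots\circ\phi_1$ with $\phi_i\in S$, $n\geq1$. Suppose $F=\{Q_1,\dots,Q_n\}$ is a finite subset of $X$ such that (1) $\phi(X\setminus F)\subseteq X\setminus F$ for all $\phi\in S$, and (2) for each $Q_i\in F$ there exists $f_i\in M_S$ with $f_i(Q_i)\notin F$. Then there exists $g\in M_S$ such that $g(Q_i)\notin F$ for all $Q_i\in F$. *)

theory Defs
  imports Main
begin

inductive_set gen_monoid :: "('a \<Rightarrow> 'a) set \<Rightarrow> ('a \<Rightarrow> 'a) set"
  for S :: "('a \<Rightarrow> 'a) set" where
  gen_id: "id \<in> gen_monoid S"
| gen_comp: "\<phi> \<in> S \<Longrightarrow> g \<in> gen_monoid S \<Longrightarrow> \<phi> \<circ> g \<in> gen_monoid S"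

end

theory Submission
  imports Defs
begin

text \<open>Points of F are pushed out one at a time: once g has sent the points of G outside F, some
  f sends the new point g x outside F as well, and f \<circ> g keeps the points of G outside because the
  complement of F is invariant under the whole monoid.\<close>

lemma gen_monoid_comp:
  assumes "f \<in> gen_monoid S" and "g \<in> gen_monoid S"
  shows "f \<circ> g \<in> gen_monoid S"
  using assms
proof (induction f rule: gen_monoid.induct)
  case gen_id
  then show ?case by simp
next
  case (gen_comp \<phi> h)
  then have "\<phi> \<circ> (h \<circ> g) \<in> gen_monoid S" by (blast intro: gen_monoid.gen_comp)
  then show ?case by (simp only: comp_assoc)
qed

lemma gen_monoid_preserves_compl:
  assumes "\<And>\<phi>. \<phi> \<in> S \<Longrightarrow> \<phi> ` (UNIV - F) \<subseteq> UNIV - F"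
    and "g \<in> gen_monoid S" and "x \<notin> F"
  shows "g x \<notin> F"
  using assms(2,3)
proof (induction g rule: gen_monoid.induct)
  case gen_id
  then show ?case by simp
next
  case (gen_comp \<phi> h)
  then show ?case using assms(1)[of \<phi>] by auto
qed

lemma gen_monoid_move_out_finite:
  assumes "finite G" and "G \<subseteq> F"
    and compl_inv: "\<And>\<phi>. \<phi> \<in> S \<Longrightarrow> \<phi> ` (UNIV - F) \<subseteq> UNIV - F"
    and escape: "\<And>Q. Q \<in> F \<Longrightarrow> \<exists>f \<in> gen_monoid S. f Q \<notin> F"
  shows "\<exists>g \<in> gen_monoid S. \<forall>Q \<in> G. g Q \<notin> F"
  using assms(1,2)
proof (induction G rule: finite_induct)
  case empty
  then show ?case using gen_monoid.gen_id by blast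
next
  case (insert x G)
  then obtain g where g: "g \<in> gen_monoid S" "\<forall>Q \<in> G. g Q \<notin> F" by auto
  show ?case
  proof (cases "g x \<in> F")
    case False
    then show ?thesis using g by auto
  next
    case True
    then obtain f where f: "f \<in> gen_monoid S" "f (g x) \<notin> F" using escape by blast
    have "f \<circ> g \<in> gen_monoid S" using f(1) g(1) by (rule gen_monoid_comp)
    moreover have "\<forall>Q \<in> insert x G. (f \<circ> g) Q \<notin> F"
      using f g gen_monoid_preserves_compl[OF compl_inv f(1)] by auto
    ultimately show ?thesis by blast
  qed
qed

theorem lemma4p1:
  fixes S :: "('a \<Rightarrow> 'a) set" and F :: "'a set"
  assumes "finite F"
    and "\<And>\<phi>. \<phi> \<in> S \<Longrightarrow> \<phi> ` (UNIV - F) \<subseteq> UNIV - F"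
    and "\<And>Q. Q \<in> F \<Longrightarrow> \<exists>f \<in> gen_monoid S. f Q \<notin> F"
  shows "\<exists>g \<in> gen_monoid S. \<forall>Q \<in> F. g Q \<notin> F"
  using gen_monoid_move_out_finite[OF assms(1) order_refl assms(2,3)] .

end
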